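(* Let $T(n)$ denote the number of fixed polyiamonds with $n$ cells. If $\ell,m\ge 1$ are positive integers that are not both equal to $1$, then $T(\ell+m)\ge T(\ell)\,T(m)$.
   Context: The triangular lattice is the tiling of the plane by equilateral triangles; its cells come in two orientations. A polyiamond with $n$ cells is a finite set of $n$ cells of the triangular lattice that is edge-connected, i.e. the graph on the cells in which two cells are adjacent when they share an edge is connected. Two polyiamonds are considered the same if one is a translate of the other (no rotations or reflections allowed); $T(n)$ is the number of such translation classes of polyiamonds with $n$ cells. For example $T(1)=2$, $T(2)=3$, $T(3)=6$. *)

theory Defs
  imports Main
begin

text \<open>We use lattice coordinates: the lattice
points are a*u + b*v with u, v unit vectors at 60 degrees. The cell (x, y, False)
is the "up" triangle with vertices (x,y), (x+1,y), (x,y+1); the cell (x, y, True)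
is the "down" triangle with vertices (x+1,y), (x,y+1), (x+1,y+1).\<close>

type_synonym cell = "int \<times> int \<times> bool"

text \<open>Two cells are adjacent iff they share an edge. Each up triangle (x,y)
shares its three edges with the down triangles (x,y), (x,y-1), (x-1,y).\<close>

definition up_down_adj :: "cell \<Rightarrow> cell \<Rightarrow> bool" where
  "up_down_adj c d \<longleftrightarrow>
     (\<exists>x y. c = (x, y, False) \<and>
        (d = (x, y, True) \<or> d = (x, y - 1, True) \<or> d = (x - 1, y, True)))"

definition adjacent :: "cell \<Rightarrow> cell \<Rightarrow> bool" where
  "adjacent c d \<longleftrightarrow> up_down_adj c d \<or> up_down_adj d c"

definition edge_connected :: "cell set \<Rightarrow> bool" where
  "edge_connected P \<longleftrightarrow>
     (\<forall>c\<in>P. \<forall>d\<in>P. (c, d) \<in> {(a, b). a \<in> P \<and> b \<in> P \<and> adjacent a b}\<^sup>*)"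

definition polyiamond :: "nat \<Rightarrow> cell set \<Rightarrow> bool" where
  "polyiamond n P \<longleftrightarrow> finite P \<and> card P = n \<and> edge_connected P"

definition translate :: "int \<Rightarrow> int \<Rightarrow> cell set \<Rightarrow> cell set" where
  "translate a b P = (\<lambda>(x, y, s). (x + a, y + b, s)) ` P"

definition translation_class :: "nat \<Rightarrow> cell set \<Rightarrow> cell set set" where
  "translation_class n P = {Q. polyiamond n Q \<and> (\<exists>a b. Q = translate a b P)}"

definition T :: "nat \<Rightarrow> nat" where
  "T n = card {translation_class n P | P. polyiamond n P}"

end

theory Submission
  imports Defs "HOL-Library.Product_Plus"
begin

(*
  In brick coordinates the triangular lattice becomes a brick wall whose rows are the rows of
  triangles. Given polyiamonds P with l cells and Q with m >= 2 cells, a translate of Q or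
  of its mirror image is glued to the right of the last column of P, so that the result is a
  polyiamond with l + m cells from which P can be read off (its l leftmost bricks, except that one
  pair of stacked bricks in the splitting column is resolved by orientation) and then Q, up to
  translation, from P and the remaining bricks. Parity obstructions force seven variants of the
  gluing, all recognisable from the result. This gives an injection from pairs of translation
  classes into translation classes with l + m cells. For l = m = 1 no such injection exists
  (T 2 = 3 < 4 = T 1 * T 1).
*)

section \<open>Connectivity with respect to an arbitrary adjacency relation\<close>

definition induced_edges :: "('a \<Rightarrow> 'a \<Rightarrow> bool) \<Rightarrow> 'a set \<Rightarrow> ('a \<times> 'a) set" where
  "induced_edges R S = {(a, b). a \<in> S \<and> b \<in> S \<and> R a b}"

definition connected_in :: "('a \<Rightarrow> 'a \<Rightarrow> bool) \<Rightarrow> 'a set \<Rightarrow> bool" where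
  "connected_in R S \<longleftrightarrow> (\<forall>c\<in>S. \<forall>d\<in>S. (c, d) \<in> (induced_edges R S)\<^sup>*)"

lemma induced_edges_mono: "A \<subseteq> B \<Longrightarrow> induced_edges R A \<subseteq> induced_edges R B"
  by (auto simp: induced_edges_def)

lemma sym_induced_edges: "symp R \<Longrightarrow> sym (induced_edges R S)"
  by (auto simp: induced_edges_def sym_def dest: sympD)

lemma connected_in_image:
  assumes "connected_in R S" and "\<And>a b. a \<in> S \<Longrightarrow> b \<in> S \<Longrightarrow> R a b \<Longrightarrow> R' (f a) (f b)"
  shows "connected_in R' (f ` S)"
  unfolding connected_in_def
proof (intro ballI)
  fix c' d' assume "c' \<in> f ` S" "d' \<in> f ` S"
  then obtain c d where cd: "c \<in> S" "d \<in> S" "c' = f c" "d' = f d" by blast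
  have "(c, d) \<in> (induced_edges R S)\<^sup>*" using assms(1) cd unfolding connected_in_def by blast
  then have "(f c, f d) \<in> (induced_edges R' (f ` S))\<^sup>*"
  proof (induction rule: rtrancl_induct)
    case (step y z)
    then have "(f y, f z) \<in> induced_edges R' (f ` S)" by (auto simp: induced_edges_def assms(2))
    with step.IH show ?case by (rule rtrancl_into_rtrancl)
  qed simp
  then show "(c', d') \<in> (induced_edges R' (f ` S))\<^sup>*" using cd by simp
qed

lemma connected_inI_root:
  assumes "symp R" and "\<And>d. d \<in> S \<Longrightarrow> (c, d) \<in> (induced_edges R S)\<^sup>*"
  shows "connected_in R S"
  unfolding connected_in_def
proof (intro ballI)
  fix d e assume "d \<in> S" "e \<in> S"
  have "sym ((induced_edges R S)\<^sup>*)" using sym_rtrancl[OF sym_induced_edges[OF assms(1)]] .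
  then have "(d, c) \<in> (induced_edges R S)\<^sup>*" using assms(2)[OF \<open>d \<in> S\<close>] by (auto dest: symD)
  then show "(d, e) \<in> (induced_edges R S)\<^sup>*" using assms(2)[OF \<open>e \<in> S\<close>] by (rule rtrancl_trans)
qed

lemma connected_in_Un:
  assumes "symp R" "connected_in R A" "connected_in R B" "a \<in> A" "b \<in> B" "R a b"
  shows "connected_in R (A \<union> B)"
proof (rule connected_inI_root[OF assms(1)])
  let ?E = "induced_edges R (A \<union> B)"
  have sub: "(c, d) \<in> ?E\<^sup>*" if "connected_in R X" "X \<subseteq> A \<union> B" "c \<in> X" "d \<in> X" for X c d
    using that rtrancl_mono[OF induced_edges_mono[where R = R, OF that(2)]]
    by (auto simp: connected_in_def)
  have "(a, b) \<in> ?E" using assms(4-6) by (simp add: induced_edges_def)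
  fix d assume "d \<in> A \<union> B"
  then show "(a, d) \<in> ?E\<^sup>*"
  proof
    assume "d \<in> A" then show ?thesis using sub[OF assms(2) _ assms(4)] by blast
  next
    assume "d \<in> B"
    then have "(b, d) \<in> ?E\<^sup>*" using sub[OF assms(3) _ assms(5)] by blast
    with \<open>(a, b) \<in> ?E\<close> show ?thesis by (rule converse_rtrancl_into_rtrancl)
  qed
qed

lemma connected_in_remove_leaf:
  assumes "symp R" "connected_in R S" "n \<in> S" "q \<noteq> n" "\<And>d. d \<in> S \<Longrightarrow> R q d \<Longrightarrow> d = n"
  shows "connected_in R (S - {q})"
proof (rule connected_inI_root[OF assms(1)])
  let ?E = "induced_edges R S" and ?E' = "induced_edges R (S - {q})"
  fix d assume d: "d \<in> S - {q}"
  have "(n, d) \<in> ?E\<^sup>*" using assms(2,3) d by (auto simp: connected_in_def)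
  then have "d \<noteq> q \<longrightarrow> (n, d) \<in> ?E'\<^sup>*"
  proof (induction rule: rtrancl_induct)
    case (step y z)
    show ?case
    proof
      assume "z \<noteq> q"
      have yz: "y \<in> S" "z \<in> S" "R y z" using step.hyps(2) by (auto simp: induced_edges_def)
      show "(n, z) \<in> ?E'\<^sup>*"
      proof (cases "y = q")
        case True
        then show ?thesis using assms(5) yz by simp
      next
        case False
        then have "(y, z) \<in> ?E'" using yz \<open>z \<noteq> q\<close> by (simp add: induced_edges_def)
        with step.IH False show ?thesis by (simp add: rtrancl_into_rtrancl)
      qed
    qed
  qed simp
  then show "(n, d) \<in> ?E'\<^sup>*" using d by simp
qed

lemma connected_in_singleton: "connected_in R {c}"
  by (simp add: connected_in_def)

lemma connected_in_neighbour:
  assumes "connected_in R S" "q \<in> S" "d \<in> S" "q \<noteq> d"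
  obtains e where "e \<in> S" "R q e"
proof -
  have "(q, d) \<in> (induced_edges R S)\<^sup>*" using assms(1-3) by (auto simp: connected_in_def)
  then show ?thesis
    using assms(4) that by (cases rule: converse_rtranclE) (auto simp: induced_edges_def)
qed

text \<open>Along a path, such an \<open>f\<close> takes every intermediate value.\<close>

lemma connected_in_lipschitz_bound:
  fixes f :: "'a \<Rightarrow> int"
  assumes "connected_in R S" "finite S" "\<And>y z. R y z \<Longrightarrow> \<bar>f z - f y\<bar> \<le> 1" "c \<in> S" "d \<in> S"
  shows "\<bar>f d - f c\<bar> < int (card S)"
proof -
  have "(c, d) \<in> (induced_edges R S)\<^sup>*" using assms(1,4,5) by (auto simp: connected_in_def)
  then have "{min (f c) (f d) .. max (f c) (f d)} \<subseteq> f ` S"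
  proof (induction rule: rtrancl_induct)
    case base
    then show ?case using assms(4) by auto
  next
    case (step y z)
    have "z \<in> S" "\<bar>f z - f y\<bar> \<le> 1" using step.hyps(2) assms(3) by (auto simp: induced_edges_def)
    moreover have "{min (f c) (f z) .. max (f c) (f z)} \<subseteq>
        insert (f z) {min (f c) (f y) .. max (f c) (f y)}"
      using \<open>\<bar>f z - f y\<bar> \<le> 1\<close> by auto
    ultimately show ?case using step.IH by blast
  qed
  then have "card {min (f c) (f d) .. max (f c) (f d)} \<le> card (f ` S)"
    by (rule card_mono[OF finite_imageI[OF assms(2)]])
  also have "\<dots> \<le> card S" using assms(2) by (rule card_image_le)
  finally show ?thesis by simp
qed

section \<open>Brick coordinates\<close>

text \<open>A row of triangles becomes a
row of bricks in which horizontal neighbours always share an edge, and the brick \<open>(k, r)\<close>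
shares an edge with the brick \<open>(k, r + 1)\<close> above it iff \<open>k + r\<close> is odd, i.e. iff it comes from a
down triangle. Translations of the triangular lattice become the translations by vectors with
even coordinate sum.\<close>

type_synonym brick = "int \<times> int"

definition to_brick :: "cell \<Rightarrow> brick" where
  "to_brick c = (case c of (x, y, s) \<Rightarrow> (2 * x + y + (if s then 1 else 0), y))"

definition of_brick :: "brick \<Rightarrow> cell" where
  "of_brick p =
     (case p of (k, r) \<Rightarrow> ((k - r - (if odd (k + r) then 1 else 0)) div 2, r, odd (k + r)))"

definition is_down :: "brick \<Rightarrow> bool" where
  "is_down c \<longleftrightarrow> odd (fst c + snd c)"

definition brick_adj :: "brick \<Rightarrow> brick \<Rightarrow> bool" where
  "brick_adj c d \<longleftrightarrow>
     (snd d = snd c \<and> (fst d = fst c + 1 \<or> fst c = fst d + 1)) \<or>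
     (fst d = fst c \<and> (snd d = snd c + 1 \<and> is_down c \<or> snd c = snd d + 1 \<and> is_down d))"

definition brick_poly :: "nat \<Rightarrow> brick set \<Rightarrow> bool" where
  "brick_poly n S \<longleftrightarrow> finite S \<and> card S = n \<and> connected_in brick_adj S"

definition even_vec :: "brick \<Rightarrow> bool" where
  "even_vec v \<longleftrightarrow> even (fst v + snd v)"

definition shift :: "brick \<Rightarrow> brick set \<Rightarrow> brick set" where
  "shift v S = (+) v ` S"

definition brick_equiv :: "brick set \<Rightarrow> brick set \<Rightarrow> bool" where
  "brick_equiv S S' \<longleftrightarrow> (\<exists>v. even_vec v \<and> S' = shift v S)"

definition brick_class :: "nat \<Rightarrow> brick set \<Rightarrow> brick set set" where
  "brick_class n S = {S'. brick_poly n S' \<and> brick_equiv S S'}"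

definition brick_classes :: "nat \<Rightarrow> brick set set set" where
  "brick_classes n = {brick_class n S | S. brick_poly n S}"

lemma of_brick_to_brick [simp]: "of_brick (to_brick c) = c"
  by (cases c) (auto simp: to_brick_def of_brick_def)

lemma to_brick_of_brick [simp]: "to_brick (of_brick p) = p"
proof (cases p)
  case (Pair k r)
  have "2 * ((k - r - (if odd (k + r) then 1 else 0)) div 2) =
      k - r - (if odd (k + r) then 1 else 0)"
    by (rule dvd_mult_div_cancel) presburger
  then show ?thesis by (simp add: Pair to_brick_def of_brick_def)
qed

lemma inj_to_brick: "inj to_brick"
  by (metis of_brick_to_brick injI)

lemma adjacent_iff_brick_adj: "adjacent c d \<longleftrightarrow> brick_adj (to_brick c) (to_brick d)"
  by (cases c; cases d)
    (auto simp: adjacent_def up_down_adj_def brick_adj_def to_brick_def is_down_def; presburger)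

lemma symp_brick_adj: "symp brick_adj"
  by (auto simp: symp_def brick_adj_def)

lemma edge_connected_eq_connected_in: "edge_connected = connected_in adjacent"
  by (simp add: fun_eq_iff edge_connected_def connected_in_def induced_edges_def)

lemma polyiamond_iff_brick_poly: "polyiamond n P \<longleftrightarrow> brick_poly n (to_brick ` P)"
proof -
  have "connected_in adjacent P \<longleftrightarrow> connected_in brick_adj (to_brick ` P)"
  proof
    assume "connected_in adjacent P"
    then show "connected_in brick_adj (to_brick ` P)"
      by (rule connected_in_image) (simp add: adjacent_iff_brick_adj)
  next
    assume "connected_in brick_adj (to_brick ` P)"
    then have "connected_in adjacent (of_brick ` to_brick ` P)"
      by (rule connected_in_image) (auto simp: adjacent_iff_brick_adj)
    then show "connected_in adjacent P" by (simp add: image_image)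
  qed
  moreover have "finite (to_brick ` P) \<longleftrightarrow> finite P" "card (to_brick ` P) = card P"
    using inj_to_brick by (auto simp: finite_image_iff card_image inj_on_subset)
  ultimately show ?thesis
    by (simp add: polyiamond_def brick_poly_def edge_connected_eq_connected_in)
qed

lemma mem_shift: "c \<in> shift v S \<longleftrightarrow> c - v \<in> S"
  by (force simp: shift_def algebra_simps)

lemma add_mem_shift [simp]: "v + c \<in> shift v S \<longleftrightarrow> c \<in> S"
  by (simp add: mem_shift)

lemma shift_shift [simp]: "shift v (shift w S) = shift (v + w) S"
  by (simp add: shift_def image_image add.assoc)

lemma shift_zero [simp]: "shift 0 S = S"
  by (simp add: shift_def)

lemma finite_shift [simp]: "finite (shift v S) \<longleftrightarrow> finite S"
  by (simp add: shift_def finite_image_iff)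

lemma card_shift [simp]: "card (shift v S) = card S"
  by (simp add: shift_def card_image)

lemma shift_insert [simp]: "shift v (insert c A) = insert (v + c) (shift v A)"
  by (simp add: shift_def)

lemma shift_minus_shift [simp]: "shift (- v) (shift v S) = S"
  by simp

lemma shift_fixed:
  assumes "finite S" "S \<noteq> {}" "shift v S = S"
  shows "v = 0"
proof -
  have "(\<Sum>c\<in>S. g c) = (\<Sum>c\<in>S. g c) + int (card S) * g v"
    if "\<And>c d. g (c + d) = g c + g d" for g :: "brick \<Rightarrow> int"
  proof -
    have "(\<Sum>c\<in>S. g c) = (\<Sum>c\<in>shift v S. g c)" using assms(3) by simp
    also have "\<dots> = (\<Sum>c\<in>S. g (v + c))" by (simp add: shift_def sum.reindex)
    also have "\<dots> = (\<Sum>c\<in>S. g c) + int (card S) * g v" by (simp add: that sum.distrib)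
    finally show ?thesis .
  qed
  moreover have "card S \<noteq> 0" using assms(1,2) by simp
  ultimately have "fst v = 0" "snd v = 0" by (metis add_cancel_left_right fst_add snd_add
      mult_eq_0_iff of_nat_eq_0_iff)+
  then show ?thesis by (simp add: prod_eq_iff)
qed

lemma even_vec_minus: "even_vec v \<Longrightarrow> even_vec (- v)"
  by (simp add: even_vec_def)

lemma even_vec_add: "even_vec v \<Longrightarrow> even_vec w \<Longrightarrow> even_vec (v + w)"
  by (simp add: even_vec_def)

lemma even_vec_diff_iff: "even_vec (d - c) \<longleftrightarrow> is_down c = is_down d"
  by (simp add: even_vec_def is_down_def) presburger

lemma is_down_add [simp]: "even_vec v \<Longrightarrow> is_down (v + c) = is_down c"
  by (simp add: even_vec_def is_down_def) presburger

lemma brick_adj_add [simp]: "even_vec v \<Longrightarrow> brick_adj (v + c) (v + d) = brick_adj c d"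
  by (auto simp: brick_adj_def)

lemma brick_poly_shift [simp]:
  assumes "even_vec v"
  shows "brick_poly n (shift v S) \<longleftrightarrow> brick_poly n S"
proof -
  have *: "connected_in brick_adj (shift w S)" if "even_vec w" "connected_in brick_adj S" for w S
    using that(2) unfolding shift_def by (rule connected_in_image) (simp add: that(1))
  have "connected_in brick_adj (shift v S) \<longleftrightarrow> connected_in brick_adj S"
    using *[OF assms] *[OF even_vec_minus[OF assms], of "shift v S"] by auto
  then show ?thesis by (simp add: brick_poly_def)
qed

lemma to_brick_translate: "to_brick ` translate a b P = shift (2 * a + b, b) (to_brick ` P)"
  unfolding translate_def shift_def image_image
  by (rule image_cong) (auto simp: to_brick_def)

lemma brick_equiv_refl: "brick_equiv S S"
  unfolding brick_equiv_def by (rule exI[of _ 0]) (simp add: even_vec_def)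

lemma brick_equiv_sym: "brick_equiv S S' \<Longrightarrow> brick_equiv S' S"
  unfolding brick_equiv_def by (metis even_vec_minus shift_minus_shift)

lemma brick_equiv_trans: "brick_equiv S S' \<Longrightarrow> brick_equiv S' S'' \<Longrightarrow> brick_equiv S S''"
  unfolding brick_equiv_def by (metis even_vec_add shift_shift)

lemma brick_equiv_shift: "even_vec v \<Longrightarrow> brick_equiv S (shift v S)"
  unfolding brick_equiv_def by blast

lemma brick_poly_brick_equiv: "brick_equiv S S' \<Longrightarrow> brick_poly n S \<Longrightarrow> brick_poly n S'"
  by (auto simp: brick_equiv_def)

lemma brick_class_eq: "brick_equiv S S' \<Longrightarrow> brick_class n S = brick_class n S'"
  unfolding brick_class_def by (auto intro: brick_equiv_trans brick_equiv_sym)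

lemma brick_class_self: "brick_poly n S \<Longrightarrow> S \<in> brick_class n S"
  by (simp add: brick_class_def brick_equiv_refl)

lemma brick_equiv_if_class_eq:
  "brick_poly n S \<Longrightarrow> brick_class n S = brick_class n S' \<Longrightarrow> brick_equiv S' S"
  unfolding brick_class_def using brick_equiv_refl by blast

lemma image_translation_class:
  "(`) to_brick ` translation_class n P = brick_class n (to_brick ` P)"
proof (intro equalityI subsetI)
  fix S assume "S \<in> (`) to_brick ` translation_class n P"
  then obtain a b where "S = to_brick ` translate a b P" "polyiamond n (translate a b P)"
    by (auto simp: translation_class_def)
  moreover have "even_vec (2 * a + b, b)" by (simp add: even_vec_def)
  ultimately show "S \<in> brick_class n (to_brick ` P)"
    by (auto simp: brick_class_def brick_equiv_def polyiamond_iff_brick_poly to_brick_translate)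
next
  fix S assume "S \<in> brick_class n (to_brick ` P)"
  then obtain v where v: "brick_poly n S" "even_vec v" "S = shift v (to_brick ` P)"
    by (auto simp: brick_class_def brick_equiv_def)
  obtain u w where uw: "v = (u, w)" by fastforce
  define a where "a = (u - w) div 2"
  have "2 * a + w = u" using v(2) uw unfolding a_def even_vec_def by simp
  then have "S = to_brick ` translate a w P" using v(3) uw by (simp add: to_brick_translate)
  with v(1) show "S \<in> (`) to_brick ` translation_class n P"
    by (auto simp: translation_class_def polyiamond_iff_brick_poly)
qed

lemma T_eq_card_brick_classes: "T n = card (brick_classes n)"
proof -
  let ?F = "(`) ((`) to_brick)" and ?C = "{translation_class n P | P. polyiamond n P}"
  have "inj ((`) to_brick)" by (meson injI inj_image_eq_iff inj_to_brick)
  then have inj: "inj ?F" by (meson injI inj_image_eq_iff)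
  have "?F ` ?C = brick_classes n"
  proof (intro equalityI subsetI)
    fix K assume "K \<in> ?F ` ?C"
    then obtain P where "K = brick_class n (to_brick ` P)" "polyiamond n P"
      by (auto simp: image_translation_class)
    then show "K \<in> brick_classes n"
      unfolding brick_classes_def polyiamond_iff_brick_poly by blast
  next
    fix K assume "K \<in> brick_classes n"
    then obtain S where "K = brick_class n S" "brick_poly n S" by (auto simp: brick_classes_def)
    moreover have "to_brick ` of_brick ` S = S" by (simp add: image_image)
    ultimately have "K = ?F (translation_class n (of_brick ` S))" "polyiamond n (of_brick ` S)"
      by (simp_all add: image_translation_class polyiamond_iff_brick_poly)
    then show "K \<in> ?F ` ?C" by blast
  qed
  then have "card (brick_classes n) = card (?F ` ?C)" by simp
  also have "\<dots> = card ?C" by (rule card_image[OF inj_on_subset[OF inj subset_UNIV]])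
  finally show ?thesis by (simp add: T_def)
qed

definition mirror :: "brick \<Rightarrow> brick" where
  "mirror c = (fst c, 1 - snd c)"

lemma mirror_Pair [simp]: "mirror (k, r) = (k, 1 - r)"
  by (simp add: mirror_def)

lemma mirror_mirror [simp]: "mirror (mirror c) = c"
  by (simp add: mirror_def)

lemma mirror_image_mirror_image [simp]: "mirror ` mirror ` S = S"
  by (simp add: image_image)

lemma mem_mirror_image: "c \<in> mirror ` S \<longleftrightarrow> mirror c \<in> S"
  by (metis image_iff mirror_mirror)

lemma is_down_mirror [simp]: "is_down (mirror c) \<longleftrightarrow> \<not> is_down c"
  by (simp add: mirror_def is_down_def)

lemma brick_adj_mirror [simp]: "brick_adj (mirror c) (mirror d) = brick_adj c d"
proof -
  have "snd d = snd c + 1 \<Longrightarrow> is_down d = (\<not> is_down c)"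
    "snd c = snd d + 1 \<Longrightarrow> is_down c = (\<not> is_down d)"
    if "fst d = fst c" using that by (simp_all add: is_down_def)
  then show ?thesis
    using is_down_mirror[of c] is_down_mirror[of d]
    by (auto simp: brick_adj_def mirror_def simp del: is_down_mirror)
qed

lemma brick_poly_mirror_image [simp]: "brick_poly n (mirror ` S) \<longleftrightarrow> brick_poly n S"
proof -
  have *: "connected_in brick_adj (mirror ` S)" if "connected_in brick_adj S" for S
    using that by (rule connected_in_image) simp
  have "connected_in brick_adj (mirror ` S) \<longleftrightarrow> connected_in brick_adj S"
    using *[of S] *[of "mirror ` S"] by auto
  moreover have "inj mirror" by (metis injI mirror_mirror)
  ultimately show ?thesis by (simp add: brick_poly_def finite_image_iff card_image inj_on_subset)
qed

lemma mirror_image_shift: "mirror ` shift v S = shift (fst v, - snd v) (mirror ` S)"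
  unfolding shift_def image_image by (rule image_cong) (auto simp: mirror_def)

lemma brick_equiv_mirror_image:
  assumes "brick_equiv (mirror ` S) S'"
  shows "brick_equiv S (mirror ` S')"
proof -
  obtain v where "even_vec v" "S' = shift v (mirror ` S)" using assms
    by (auto simp: brick_equiv_def)
  moreover have "even_vec (fst v, - snd v)" using \<open>even_vec v\<close> by (simp add: even_vec_def)
  ultimately show ?thesis by (auto simp: brick_equiv_def mirror_image_shift)
qed

lemma brick_poly_in_box:
  assumes "brick_poly n S"
  obtains S' where "brick_equiv S S'" "S' \<subseteq> {- int n .. int n + 1} \<times> {- int n .. int n}"
proof (cases "S = {}")
  case True
  then show ?thesis using that brick_equiv_refl by blast
next
  case False
  then obtain c where c: "c \<in> S" by blast
  define v where "v = ((if is_down c then 1 else 0) - fst c, - snd c)"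
  have v: "even_vec v" by (simp add: v_def even_vec_def is_down_def)
  have S: "finite S" "connected_in brick_adj S" "card S = n" using assms
    by (auto simp: brick_poly_def)
  have "shift v S \<subseteq> {- int n .. int n + 1} \<times> {- int n .. int n}"
  proof
    fix d' assume "d' \<in> shift v S"
    then obtain d where d: "d \<in> S" "d' = v + d" by (auto simp: shift_def)
    have "\<bar>fst z - fst y\<bar> \<le> 1" "\<bar>snd z - snd y\<bar> \<le> 1" if "brick_adj y z" for y z
      using that by (auto simp: brick_adj_def)
    then have "\<bar>fst d - fst c\<bar> < int n" "\<bar>snd d - snd c\<bar> < int n"
      using connected_in_lipschitz_bound[OF S(2,1) _ c d(1)] S(3) by auto
    then show "d' \<in> {- int n .. int n + 1} \<times> {- int n .. int n}"
      by (cases d) (auto simp: d(2) v_def)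
  qed
  then show ?thesis using that brick_equiv_shift[OF v] by blast
qed

lemma finite_brick_classes: "finite (brick_classes n)"
proof (rule finite_subset)
  let ?B = "{- int n .. int n + 1} \<times> {- int n .. int n}"
  show "brick_classes n \<subseteq> brick_class n ` Pow ?B"
  proof
    fix K assume "K \<in> brick_classes n"
    then obtain S where S: "K = brick_class n S" "brick_poly n S" by (auto simp: brick_classes_def)
    obtain S' where "brick_equiv S S'" "S' \<subseteq> ?B" using brick_poly_in_box[OF S(2)] .
    then show "K \<in> brick_class n ` Pow ?B" using S(1) brick_class_eq by blast
  qed
qed simp

section \<open>Columns and the decoding of a composite\<close>

definition col :: "brick set \<Rightarrow> int \<Rightarrow> int set" where
  "col S k = {r. (k, r) \<in> S}"

definition first_col :: "brick set \<Rightarrow> int" where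
  "first_col S = Min (fst ` S)"

definition last_col :: "brick set \<Rightarrow> int" where
  "last_col S = Max (fst ` S)"

lemma mem_col [simp]: "r \<in> col S k \<longleftrightarrow> (k, r) \<in> S"
  by (simp add: col_def)

lemma finite_col: "finite S \<Longrightarrow> finite (col S k)"
  by (rule finite_subset[of _ "snd ` S"]) force+

lemma card_less_2_eq_singleton:
  assumes "finite A" "A \<noteq> {}" "card A < 2" "z \<in> A"
  shows "A = {z}"
  using assms by (metis One_nat_def card_1_singletonE card_gt_0_iff less_2_cases
      less_numeral_extra(3) singletonD)

lemma first_col_le: "finite S \<Longrightarrow> c \<in> S \<Longrightarrow> first_col S \<le> fst c"
  by (simp add: first_col_def)

lemma le_last_col: "finite S \<Longrightarrow> c \<in> S \<Longrightarrow> fst c \<le> last_col S"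
  by (simp add: last_col_def)

lemma col_first_col_nonempty:
  assumes "finite S" "S \<noteq> {}" shows "col S (first_col S) \<noteq> {}"
proof -
  have "first_col S \<in> fst ` S" unfolding first_col_def using assms by (intro Min_in) auto
  then obtain c where "c \<in> S" "first_col S = fst c" by blast
  then have "snd c \<in> col S (first_col S)" by simp
  then show ?thesis by blast
qed

lemma col_last_col_nonempty:
  assumes "finite S" "S \<noteq> {}" shows "col S (last_col S) \<noteq> {}"
proof -
  have "last_col S \<in> fst ` S" unfolding last_col_def using assms by (intro Max_in) auto
  then obtain c where "c \<in> S" "last_col S = fst c" by blast
  then have "snd c \<in> col S (last_col S)" by simp
  then show ?thesis by blast
qed

lemma first_col_mirror_image [simp]: "first_col (mirror ` S) = first_col S"
  by (simp add: first_col_def image_image mirror_def)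

definition cells_upto :: "brick set \<Rightarrow> int \<Rightarrow> brick set" where
  "cells_upto U k = {c \<in> U. fst c \<le> k}"

definition split_col :: "nat \<Rightarrow> brick set \<Rightarrow> int" where
  "split_col l U = Min {k \<in> fst ` U. l \<le> card (cells_upto U k)}"

definition split_cell :: "brick set \<Rightarrow> int \<Rightarrow> int \<Rightarrow> brick" where
  "split_cell U k r = (if is_down (k, r) \<and> (k + 1, r + 1) \<notin> U then (k, r + 1) else (k, r))"

text \<open>\<open>decode l U\<close> recovers the first factor of the composites built below: the \<open>l\<close> cells of
the leftmost columns, except that the splitting column may contain two stacked cells, one from
each factor, of which \<open>split_cell\<close> picks the one of the first factor.\<close>

definition decode :: "nat \<Rightarrow> brick set \<Rightarrow> brick set" where
  "decode l U = (let k = split_col l U in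
     if card (cells_upto U k) = l then cells_upto U k
     else insert (split_cell U k (Min (col U k))) (cells_upto U (k - 1)))"

lemma Min_translate: "finite S \<Longrightarrow> S \<noteq> {} \<Longrightarrow> Min ((\<lambda>x. x + d) ` S) = Min S + (d :: int)"
  using Min_add_commute[of S "\<lambda>x. x" d] by simp

lemma cells_upto_mono: "k \<le> k' \<Longrightarrow> cells_upto U k \<subseteq> cells_upto U k'"
  by (auto simp: cells_upto_def)

lemma split_col_eqI:
  assumes "finite U" "k \<in> fst ` U" "card (cells_upto U (k - 1)) < l" "l \<le> card (cells_upto U k)"
  shows "split_col l U = k"
  unfolding split_col_def
proof (rule Min_eqI)
  fix k' assume k': "k' \<in> {k \<in> fst ` U. l \<le> card (cells_upto U k)}"
  show "k \<le> k'"
  proof (rule ccontr)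
    assume "\<not> k \<le> k'"
    then have "card (cells_upto U k') \<le> card (cells_upto U (k - 1))"
      using assms(1) by (intro card_mono cells_upto_mono) (auto simp: cells_upto_def)
    then show False using k' assms(3) by simp
  qed
qed (use assms in auto)

lemma cells_upto_shift: "cells_upto (shift v U) (k + fst v) = shift v (cells_upto U k)"
  by (auto simp: cells_upto_def mem_shift)

lemma col_shift: "col (shift v U) (k + fst v) = (\<lambda>r. r + snd v) ` col U k"
proof (rule set_eqI)
  fix r
  have "r \<in> col (shift v U) (k + fst v) \<longleftrightarrow> r - snd v \<in> col U k"
    by (cases v) (simp add: mem_shift)
  also have "\<dots> \<longleftrightarrow> r \<in> (\<lambda>r. r + snd v) ` col U k" by force
  finally show "r \<in> col (shift v U) (k + fst v) \<longleftrightarrow> r \<in> (\<lambda>r. r + snd v) ` col U k" .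
qed

lemma split_cell_shift:
  "even_vec v \<Longrightarrow> split_cell (shift v U) (k + fst v) (r + snd v) = v + split_cell U k r"
  using is_down_add[of v "(k, r)"] add_mem_shift[of v "(k + 1, r + 1)" U]
  by (cases v) (auto simp: split_cell_def algebra_simps)

lemma last_col_split_candidate:
  assumes "finite U" "U \<noteq> {}" "l \<le> card U"
  shows "last_col U \<in> {k \<in> fst ` U. l \<le> card (cells_upto U k)}"
proof -
  have "last_col U \<in> fst ` U" unfolding last_col_def using assms by (intro Max_in) auto
  moreover have "\<forall>c\<in>U. fst c \<le> last_col U" using le_last_col[OF assms(1)] by blast
  then have "cells_upto U (last_col U) = U" by (auto simp: cells_upto_def)
  then have "l \<le> card (cells_upto U (last_col U))" using assms(3) by simp
  ultimately show ?thesis by blast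
qed

lemma split_col_mem:
  assumes "finite U" "U \<noteq> {}" "l \<le> card U"
  shows "split_col l U \<in> fst ` U"
proof -
  let ?K = "{k \<in> fst ` U. l \<le> card (cells_upto U k)}"
  have "?K \<noteq> {}" using last_col_split_candidate[OF assms] by blast
  moreover have "finite ?K" using assms(1) by simp
  ultimately have "split_col l U \<in> ?K" unfolding split_col_def by (rule Min_in[rotated])
  then show ?thesis by simp
qed

lemma split_col_shift:
  assumes "finite U" "U \<noteq> {}" "l \<le> card U"
  shows "split_col l (shift v U) = split_col l U + fst v"
proof -
  let ?K = "\<lambda>U. {k \<in> fst ` U. l \<le> card (cells_upto U k)}"
  have "?K (shift v U) = (\<lambda>k. k + fst v) ` ?K U"
  proof (intro equalityI subsetI)
    fix k assume k: "k \<in> ?K (shift v U)"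
    then obtain c where "c \<in> U" "k = fst c + fst v" by (auto simp: shift_def)
    moreover have "cells_upto (shift v U) k = shift v (cells_upto U (k - fst v))"
      using cells_upto_shift[of v U "k - fst v"] by simp
    ultimately have "k - fst v \<in> ?K U" using k by auto
    then show "k \<in> (\<lambda>k. k + fst v) ` ?K U" by (rule image_eqI[rotated]) simp
  next
    fix k assume "k \<in> (\<lambda>k. k + fst v) ` ?K U"
    then obtain c where "c \<in> U" "k = fst c + fst v" "l \<le> card (cells_upto U (fst c))" by auto
    moreover have "k \<in> fst ` shift v U"
    proof (rule image_eqI)
      show "v + c \<in> shift v U" using \<open>c \<in> U\<close> by simp
    qed (simp add: \<open>k = fst c + fst v\<close>)
    moreover have "cells_upto (shift v U) k = shift v (cells_upto U (fst c))"
      using cells_upto_shift[of v U "fst c"] \<open>k = fst c + fst v\<close> by simp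
    ultimately show "k \<in> ?K (shift v U)" by simp
  qed
  moreover have "?K U \<noteq> {}" using last_col_split_candidate[OF assms] by blast
  moreover have "finite (?K U)" using assms(1) by simp
  ultimately show ?thesis by (simp add: split_col_def Min_translate)
qed

lemma decode_shift:
  assumes "finite U" "U \<noteq> {}" "l \<le> card U" "even_vec v"
  shows "decode l (shift v U) = shift v (decode l U)"
proof -
  let ?k = "split_col l U"
  have "col U ?k \<noteq> {}" "finite (col U ?k)"
    using split_col_mem[OF assms(1-3)] finite_col[OF assms(1)] by force+
  then have "Min (col (shift v U) (?k + fst v)) = Min (col U ?k) + snd v"
    by (simp add: col_shift Min_translate)
  moreover have "cells_upto (shift v U) (?k + fst v - 1) = shift v (cells_upto U (?k - 1))"
    using cells_upto_shift[of v U "?k - 1"] by (simp add: algebra_simps)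
  ultimately show ?thesis
    using split_cell_shift[OF assms(4)]
    by (simp add: decode_def Let_def split_col_shift[OF assms(1-3)] cells_upto_shift)
qed

lemma decode_Un_right:
  assumes "finite P" "card P = l" "1 \<le> l" "finite W" "\<forall>c\<in>W. last_col P < fst c"
  shows "decode l (P \<union> W) = P"
proof -
  let ?M = "last_col P" and ?U = "P \<union> W"
  have "?M \<in> fst ` P" unfolding last_col_def using assms(1-3) by (intro Max_in) auto
  then obtain p where p: "p \<in> P" "fst p = ?M" by auto
  have P_le: "\<forall>c\<in>P. fst c \<le> ?M" using le_last_col[OF assms(1)] by blast
  then have upto: "cells_upto ?U ?M = P" using assms(5) by (auto simp: cells_upto_def)
  have "cells_upto ?U (?M - 1) \<subseteq> P - {p}" using assms(5) p by (auto simp: cells_upto_def)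
  then have "card (cells_upto ?U (?M - 1)) \<le> card (P - {p})" using assms(1)
    by (intro card_mono) auto
  then have "card (cells_upto ?U (?M - 1)) < l" using assms(1-3) p(1) by simp
  moreover have "?M \<in> fst ` ?U" using p by force
  ultimately have "split_col l ?U = ?M"
    using upto assms(1,2,4) by (intro split_col_eqI) auto
  then show ?thesis using upto assms(2) by (simp add: decode_def)
qed

lemma Un_stacked_columns:
  assumes "finite P" "col P (last_col P) = {a}" "(last_col P, r) \<in> W" "r \<noteq> a"
    "\<forall>c\<in>W - {(last_col P, r)}. last_col P < fst c"
  shows "cells_upto (P \<union> W) (last_col P - 1) = P - {(last_col P, a)}"
    "cells_upto (P \<union> W) (last_col P) = insert (last_col P, r) P"
    "col (P \<union> W) (last_col P) = {a, r}"
proof -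
  let ?M = "last_col P"
  have P_le: "\<forall>c\<in>P. fst c \<le> ?M" using le_last_col[OF assms(1)] by blast
  have P_col: "\<forall>k r'. (k, r') \<in> P \<longrightarrow> k = ?M \<longrightarrow> r' = a" using assms(2) by (auto simp: set_eq_iff)
  have W_right: "\<forall>k r'. (k, r') \<in> W \<longrightarrow> (k, r') \<noteq> (?M, r) \<longrightarrow> ?M < k" using assms(5) by force
  show "cells_upto (P \<union> W) (?M - 1) = P - {(?M, a)}"
    using P_le P_col W_right by (fastforce simp: cells_upto_def)
  show "cells_upto (P \<union> W) ?M = insert (?M, r) P"
    using P_le W_right assms(3) by (fastforce simp: cells_upto_def)
  show "col (P \<union> W) ?M = {a, r}"
    using P_col W_right assms(2,3) by (auto simp: set_eq_iff)
qed

lemma decode_Un_stacked: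
  assumes "finite P" "card P = l" "1 \<le> l" "finite W" "col P (last_col P) = {a}"
    "(last_col P, r) \<in> W" "r \<noteq> a" "\<forall>c\<in>W - {(last_col P, r)}. last_col P < fst c"
    "split_cell (P \<union> W) (last_col P) (min a r) = (last_col P, a)"
  shows "decode l (P \<union> W) = P"
proof -
  let ?M = "last_col P" and ?U = "P \<union> W"
  note columns = Un_stacked_columns[OF assms(1,5-8)]
  have top: "(?M, a) \<in> P" using assms(5) by (metis mem_col singletonI)
  have "(?M, r) \<notin> P" using assms(5,7) by (metis mem_col singletonD)
  then have card_upto: "card (cells_upto ?U ?M) = l + 1" using columns(2) assms(1,2) by simp
  have "card (cells_upto ?U (?M - 1)) = l - 1" using columns(1) top assms(1,2) by simp
  moreover have "?M \<in> fst ` ?U" using top by force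
  ultimately have "split_col l ?U = ?M"
    using card_upto assms(1,3,4) by (intro split_col_eqI) auto
  then have "decode l ?U = insert (?M, a) (P - {(?M, a)})"
    using card_upto columns(1,3) assms(3,9) by (simp add: decode_def)
  then show ?thesis using top by auto
qed

section \<open>Gluing two polyiamonds\<close>

definition place :: "brick set \<Rightarrow> brick \<Rightarrow> brick \<Rightarrow> brick set" where
  "place S s d = shift (d - s) S"

lemma mem_place: "c \<in> place S s d \<longleftrightarrow> c - d + s \<in> S"
  by (simp add: place_def mem_shift algebra_simps)

lemma target_mem_place: "s \<in> S \<Longrightarrow> d \<in> place S s d"
  by (simp add: mem_place)

lemma place_right_of:
  assumes "\<forall>c\<in>S. fst s \<le> fst c" "c \<in> place S s d"
  shows "fst d \<le> fst c"
  using assms by (auto simp: mem_place)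

lemma brick_equiv_place: "is_down s = is_down d \<Longrightarrow> brick_equiv S (place S s d)"
  by (simp add: place_def brick_equiv_shift even_vec_diff_iff)

lemma is_down_right: "is_down (k + 1, r) \<longleftrightarrow> \<not> is_down (k, r)"
  by (simp add: is_down_def)

lemma is_down_up: "is_down (k, r + 1) \<longleftrightarrow> \<not> is_down (k, r)"
  by (simp add: is_down_def)

lemma is_down_place: "is_down s = is_down d \<Longrightarrow> is_down (c - d + s) = is_down c"
  by (simp add: is_down_def) presburger

definition last_top_row :: "brick set \<Rightarrow> int" where
  "last_top_row S = Max (col S (last_col S))"

definition first_top_row :: "brick set \<Rightarrow> int" where
  "first_top_row S = Max (col S (first_col S))"

definition unlike_rows :: "brick set \<Rightarrow> int set" where
  "unlike_rows P = {r \<in> col P (last_col P).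
     is_down (last_col P, r) \<noteq> is_down (last_col P, last_top_row P)}"

definition matching_rows :: "brick set \<Rightarrow> brick set \<Rightarrow> int set" where
  "matching_rows P Q = {r \<in> col Q (first_col Q).
     is_down (first_col Q, r) \<noteq> is_down (last_col P, last_top_row P)}"

text \<open>Let \<open>(M, a)\<close> be the top brick of the last column of \<open>P\<close>, and \<open>R\<close> the mirror image of \<open>Q\<close>.
A translate of \<open>Q\<close> or \<open>R\<close> is glued to \<open>P\<close>, mostly to the right of column \<open>M\<close>:
\<^item> \<open>Top\<close>: a brick of the first column of \<open>Q\<close> goes right of \<open>(M, a)\<close>, if the orientations allow it;
\<^item> \<open>Lower\<close>: else \<open>Q\<close> goes right of the highest brick of column \<open>M\<close> of the other orientation;
\<^item> else \<open>R\<close> fits right of \<open>(M, a)\<close>, but placing its top brick there could imitate \<open>Top\<close>.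
  So \<open>R\<close> goes right of the second brick of column \<open>M\<close> (\<open>Mirror_Lower\<close>), or the second brick
  of its first column goes right of \<open>(M, a)\<close> (\<open>Mirror_Second\<close>);
\<^item> else both columns are single bricks, and the first brick of \<open>R\<close> is put on top of \<open>(M, a)\<close>
  (\<open>Above\<close>), below it (\<open>Below\<close>), or on top and then moved right of \<open>(M, a)\<close> (\<open>Moved\<close>).
All seven cases can be told apart from \<open>P\<close> and the glued copy alone.\<close>

datatype gluing = Top | Lower | Mirror_Lower | Mirror_Second | Above | Moved | Below

definition gluing :: "brick set \<Rightarrow> brick set \<Rightarrow> gluing" where
  "gluing P Q =
    (let M = last_col P; a = last_top_row P; R = mirror ` Q; x = first_col Q; b = first_top_row R in
     if matching_rows P Q \<noteq> {} then Top
     else if unlike_rows P \<noteq> {} then Lower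
     else if 2 \<le> card (col P M) then Mirror_Lower
     else if 2 \<le> card (col R x) then Mirror_Second
     else if is_down (M, a) \<or> (x + 1, b - 1) \<in> R then Above
     else if (x + 1, b + 1) \<in> R then Moved
     else Below)"

definition glued :: "brick set \<Rightarrow> brick set \<Rightarrow> brick set" where
  "glued P Q =
    (let M = last_col P; a = last_top_row P; R = mirror ` Q; x = first_col Q; b = first_top_row R in
     case gluing P Q of
       Top \<Rightarrow> place Q (x, Max (matching_rows P Q)) (M + 1, a)
     | Lower \<Rightarrow> place Q (x, first_top_row Q) (M + 1, Max (unlike_rows P))
     | Mirror_Lower \<Rightarrow> place R (x, b) (M + 1, Max (col P M - {a}))
     | Mirror_Second \<Rightarrow> place R (x, Max (col R x - {b})) (M + 1, a)
     | Above \<Rightarrow> place R (x, b) (M, a + 1)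
     | Moved \<Rightarrow> insert (M + 1, a) (place R (x, b) (M, a + 1) - {(M, a + 1)})
     | Below \<Rightarrow> place R (x, b) (M, a - 1))"

definition top_pattern :: "brick set \<Rightarrow> brick set \<Rightarrow> bool" where
  "top_pattern P W \<longleftrightarrow> (let M = last_col P; a = last_top_row P in
     (M + 1, a) \<in> W \<and> (\<forall>r. a < r \<longrightarrow> (M + 1, r) \<in> W \<longrightarrow> is_down (M + 1, r) = is_down (M, a)))"

definition unlike_pattern :: "brick set \<Rightarrow> brick set \<Rightarrow> bool" where
  "unlike_pattern P W \<longleftrightarrow> (let M = last_col P; a = last_top_row P in
     \<forall>r. (M + 1, r) \<in> W \<longrightarrow> is_down (M + 1, r) \<noteq> is_down (M, a))"

definition gluing_of :: "brick set \<Rightarrow> brick set \<Rightarrow> gluing" where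
  "gluing_of P W =
    (let M = last_col P; a = last_top_row P in
     if \<exists>c\<in>W. fst c \<le> M then (if (M, a + 1) \<in> W then Above else Below)
     else if top_pattern P W then Top
     else if unlike_rows P \<noteq> {} then Lower
     else if 2 \<le> card (col P M) then Mirror_Lower
     else if unlike_pattern P W then Mirror_Second
     else Moved)"

lemma gluing_of_stacked:
  assumes "\<exists>c\<in>W. fst c \<le> last_col P"
  shows "gluing_of P W = (if (last_col P, last_top_row P + 1) \<in> W then Above else Below)"
  using assms by (simp add: gluing_of_def Let_def)

lemma gluing_of_right_of:
  assumes "\<forall>c\<in>W. last_col P < fst c"
  shows "gluing_of P W =
    (if top_pattern P W then Top
     else if unlike_rows P \<noteq> {} then Lower
     else if 2 \<le> card (col P (last_col P)) then Mirror_Lower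
     else if unlike_pattern P W then Mirror_Second
     else Moved)"
proof -
  have "\<not> (\<exists>c\<in>W. fst c \<le> last_col P)" using assms by force
  then show ?thesis by (simp add: gluing_of_def Let_def)
qed

definition unglue :: "brick set \<Rightarrow> brick set \<Rightarrow> brick set" where
  "unglue P W =
    (case gluing_of P W of
       Top \<Rightarrow> W
     | Lower \<Rightarrow> W
     | Moved \<Rightarrow>
         mirror ` insert (last_col P, last_top_row P + 1) (W - {(last_col P + 1, last_top_row P)})
     | _ \<Rightarrow> mirror ` W)"

locale glue_pair =
  fixes P Q :: "brick set" and l m :: nat
  assumes P: "brick_poly l P" and l_pos: "1 \<le> l" and Q: "brick_poly m Q" and m_ge_2: "2 \<le> m"
begin

abbreviation "M \<equiv> last_col P"
abbreviation "a \<equiv> last_top_row P"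
abbreviation "R \<equiv> mirror ` Q"
abbreviation "x \<equiv> first_col Q"
abbreviation "b \<equiv> first_top_row R"
abbreviation "W \<equiv> glued P Q"

lemma finite_P: "finite P" and P_nonempty: "P \<noteq> {}"
  using P l_pos by (auto simp: brick_poly_def)

lemma finite_Q: "finite Q" and Q_nonempty: "Q \<noteq> {}" and finite_R: "finite R"
  using Q m_ge_2 by (auto simp: brick_poly_def)

lemma R_poly: "brick_poly m R"
  using Q by simp

lemma fst_le_M: "c \<in> P \<Longrightarrow> fst c \<le> M"
  using le_last_col[OF finite_P] .

lemma finite_col_M: "finite (col P M)" and col_M_nonempty: "col P M \<noteq> {}"
  using finite_col[OF finite_P] col_last_col_nonempty[OF finite_P P_nonempty] .

lemma top_mem: "(M, a) \<in> P"
  using Max_in[OF finite_col_M col_M_nonempty] by (simp add: last_top_row_def)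

lemma le_top_row: "(M, r) \<in> P \<Longrightarrow> r \<le> a"
  using Max_ge[OF finite_col_M] by (simp add: last_top_row_def)

lemma x_le_fst: "c \<in> Q \<Longrightarrow> x \<le> fst c"
  using first_col_le[OF finite_Q] .

lemma x_le_fst_R: "c \<in> R \<Longrightarrow> x \<le> fst c"
  using x_le_fst by (auto simp: mirror_def)

lemma finite_col_x: "finite (col R x)" and col_x_nonempty: "col R x \<noteq> {}"
  using finite_col[OF finite_R] col_first_col_nonempty[of R] finite_R Q_nonempty by auto

lemma b_mem: "(x, b) \<in> R"
  using Max_in[OF finite_col_x col_x_nonempty] by (simp add: first_top_row_def)

lemma le_b: "(x, r) \<in> R \<Longrightarrow> r \<le> b"
  using Max_ge[OF finite_col_x] by (simp add: first_top_row_def)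

lemma gluing_Top_iff: "gluing P Q = Top \<longleftrightarrow> matching_rows P Q \<noteq> {}"
  by (simp add: gluing_def Let_def)

lemma first_col_Q_orientation:
  assumes "gluing P Q \<noteq> Top" "(x, r) \<in> Q"
  shows "is_down (x, r) = is_down (M, a)"
  using assms by (auto simp: gluing_Top_iff matching_rows_def)

text \<open>Unless \<open>Top\<close> applies, every brick of the first column of \<open>R\<close> can be glued right of
\<open>(M, a)\<close>.\<close>

lemma first_col_R_orientation:
  assumes "gluing P Q \<noteq> Top" "(x, r) \<in> R"
  shows "is_down (x, r) \<noteq> is_down (M, a)"
proof -
  have "(x, 1 - r) \<in> Q" using assms(2) by (simp add: mem_mirror_image)
  then have "is_down (x, 1 - r) = is_down (M, a)" using first_col_Q_orientation[OF assms(1)]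
    by blast
  then show ?thesis using is_down_mirror[of "(x, r)"] by simp
qed

lemma last_col_orientation:
  assumes "gluing P Q \<notin> {Top, Lower}" "(M, r) \<in> P"
  shows "is_down (M, r) = is_down (M, a)"
  using assms by (auto simp: gluing_def Let_def unlike_rows_def split: if_splits)

lemma col_M_single:
  assumes "gluing P Q \<in> {Mirror_Second, Above, Moved, Below}"
  shows "col P M = {a}"
proof (rule card_less_2_eq_singleton[OF finite_col_M col_M_nonempty])
  show "card (col P M) < 2" using assms by (auto simp: gluing_def Let_def split: if_splits)
qed (use top_mem in simp)

lemma col_x_single:
  assumes "gluing P Q \<in> {Above, Moved, Below}"
  shows "col R x = {b}"
proof (rule card_less_2_eq_singleton[OF finite_col_x col_x_nonempty])
  show "card (col R x) < 2" using assms by (auto simp: gluing_def Let_def split: if_splits)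
qed (use b_mem in simp)

lemma R_right_of_first:
  assumes "gluing P Q \<in> {Above, Moved, Below}" "c \<in> R" "c \<noteq> (x, b)"
  shows "x < fst c"
proof -
  have "fst c \<noteq> x"
  proof
    assume "fst c = x"
    then have "snd c \<in> col R x" using assms(2) by (metis mem_col prod.collapse)
    then show False using assms(3) col_x_single[OF assms(1)] \<open>fst c = x\<close>
      by (metis prod.collapse singletonD)
  qed
  then show ?thesis using x_le_fst_R[OF assms(2)] by simp
qed

lemma R_first_leaf:
  assumes "gluing P Q \<in> {Above, Moved, Below}" "d \<in> R" "brick_adj (x, b) d"
  shows "d = (x + 1, b)"
  using R_right_of_first[OF assms(1,2)] assms(3) by (cases d) (auto simp: brick_adj_def)

text \<open>Here \<open>2 \<le> m\<close> is essential: a single brick would have no neighbour.\<close>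

lemma R_first_neighbour:
  assumes "gluing P Q \<in> {Above, Moved, Below}"
  shows "(x + 1, b) \<in> R"
proof -
  have "\<not> R \<subseteq> {(x, b)}"
    using card_mono[of "{(x, b)}" R] R_poly m_ge_2 by (auto simp: brick_poly_def)
  then obtain d where "d \<in> R" "d \<noteq> (x, b)" by blast
  moreover have "connected_in brick_adj R" using R_poly by (simp add: brick_poly_def)
  ultimately obtain e where "e \<in> R" "brick_adj (x, b) e"
    using connected_in_neighbour b_mem by metis
  then show ?thesis using R_first_leaf[OF assms] by simp
qed

lemma glued_Top:
  assumes "gluing P Q = Top"
  shows "brick_equiv Q W" "(M + 1, a) \<in> W" "\<forall>c\<in>W. M < fst c"
    "\<forall>r. a < r \<longrightarrow> (M + 1, r) \<in> W \<longrightarrow> is_down (M + 1, r) = is_down (M, a)"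
proof -
  define b1 where "b1 = Max (matching_rows P Q)"
  have "finite (matching_rows P Q)"
    by (rule finite_subset[OF _ finite_col[OF finite_Q, of x]]) (auto simp: matching_rows_def)
  moreover have "matching_rows P Q \<noteq> {}" using assms gluing_Top_iff by simp
  ultimately have "b1 \<in> matching_rows P Q" and b1_max: "\<And>r. r \<in> matching_rows P Q \<Longrightarrow> r \<le> b1"
    unfolding b1_def by (auto intro: Max_in Max_ge)
  then have b1: "(x, b1) \<in> Q" "is_down (x, b1) \<noteq> is_down (M, a)"
    by (simp_all add: matching_rows_def)
  have W: "W = place Q (x, b1) (M + 1, a)" using assms by (simp add: glued_def Let_def b1_def)
  have parity: "is_down (x, b1) = is_down (M + 1, a)" using b1(2) by (simp add: is_down_right)
  show "brick_equiv Q W" using brick_equiv_place[OF parity] by (simp add: W)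
  show "(M + 1, a) \<in> W" using W b1(1) by (simp add: target_mem_place)
  show "\<forall>c\<in>W. M < fst c"
    using W place_right_of[of Q "(x, b1)" _ "(M + 1, a)"] x_le_fst by force
  show "\<forall>r. a < r \<longrightarrow> (M + 1, r) \<in> W \<longrightarrow> is_down (M + 1, r) = is_down (M, a)"
  proof (intro allI impI)
    fix r assume "a < r" "(M + 1, r) \<in> W"
    then have "(x, r - a + b1) \<in> Q" by (simp add: W mem_place)
    moreover have "r - a + b1 \<notin> matching_rows P Q" using b1_max \<open>a < r\<close> by force
    ultimately have "is_down (x, r - a + b1) = is_down (M, a)" by (simp add: matching_rows_def)
    then show "is_down (M + 1, r) = is_down (M, a)"
      using is_down_place[OF parity, of "(M + 1, r)"] by simp
  qed
qed

lemma glued_Lower: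
  assumes "gluing P Q = Lower"
  shows "brick_equiv Q W" "\<exists>a'. (M, a') \<in> P \<and> (M + 1, a') \<in> W"
    "\<forall>c\<in>W. M < fst c" "\<forall>r. (M + 1, r) \<in> W \<longrightarrow> is_down (M + 1, r) = is_down (M, a)"
proof -
  define a' where "a' = Max (unlike_rows P)"
  define b0 where "b0 = first_top_row Q"
  have "finite (unlike_rows P)"
    by (rule finite_subset[OF _ finite_col_M]) (auto simp: unlike_rows_def)
  moreover have "unlike_rows P \<noteq> {}" using assms by (auto simp: gluing_def Let_def split: if_splits)
  ultimately have "a' \<in> unlike_rows P" unfolding a'_def by (rule Max_in)
  then have a': "(M, a') \<in> P" "is_down (M, a') \<noteq> is_down (M, a)" by (simp_all add: unlike_rows_def)
  have "b0 \<in> col Q x" unfolding b0_def first_top_row_def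
    using finite_col[OF finite_Q] col_first_col_nonempty[OF finite_Q Q_nonempty] by (rule Max_in)
  then have b0: "(x, b0) \<in> Q" by simp
  have not_Top: "gluing P Q \<noteq> Top" using assms by simp
  have W: "W = place Q (x, b0) (M + 1, a')" using assms
    by (simp add: glued_def Let_def a'_def b0_def)
  have parity: "is_down (x, b0) = is_down (M + 1, a')"
    using first_col_Q_orientation[OF not_Top b0] a'(2) by (simp add: is_down_right)
  show "brick_equiv Q W" using brick_equiv_place[OF parity] by (simp add: W)
  show "\<exists>a'. (M, a') \<in> P \<and> (M + 1, a') \<in> W"
    using a'(1) W b0 by (auto simp: target_mem_place)
  show "\<forall>c\<in>W. M < fst c"
    using W place_right_of[of Q "(x, b0)" _ "(M + 1, a')"] x_le_fst by force
  show "\<forall>r. (M + 1, r) \<in> W \<longrightarrow> is_down (M + 1, r) = is_down (M, a)"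
  proof (intro allI impI)
    fix r assume "(M + 1, r) \<in> W"
    then have "(x, r - a' + b0) \<in> Q" by (simp add: W mem_place)
    then have "is_down (x, r - a' + b0) = is_down (M, a)"
      by (rule first_col_Q_orientation[OF not_Top])
    then show "is_down (M + 1, r) = is_down (M, a)"
      using is_down_place[OF parity, of "(M + 1, r)"] by simp
  qed
qed

lemma glued_Mirror_Lower:
  assumes "gluing P Q = Mirror_Lower"
  shows "brick_equiv R W" "\<exists>a2. (M, a2) \<in> P \<and> (M + 1, a2) \<in> W"
    "\<forall>c\<in>W. M < fst c" "(M + 1, a) \<notin> W"
proof -
  define a2 where "a2 = Max (col P M - {a})"
  have "2 \<le> card (col P M)" using assms by (auto simp: gluing_def Let_def split: if_splits)
  then have "col P M - {a} \<noteq> {}" using card_mono[of "{a}" "col P M"] by auto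
  then have "a2 \<in> col P M - {a}" unfolding a2_def using finite_col_M by (intro Max_in) auto
  then have a2: "(M, a2) \<in> P" "a2 < a" using le_top_row by force+
  have parity: "is_down (x, b) = is_down (M + 1, a2)"
    using first_col_R_orientation[OF _ b_mem] last_col_orientation[OF _ a2(1)] assms
    by (simp add: is_down_right)
  have W: "W = place R (x, b) (M + 1, a2)" using assms by (simp add: glued_def Let_def a2_def)
  show "brick_equiv R W" using brick_equiv_place[OF parity] by (simp add: W)
  show "\<exists>a2. (M, a2) \<in> P \<and> (M + 1, a2) \<in> W"
    using a2(1) target_mem_place[OF b_mem] W by blast
  show "\<forall>c\<in>W. M < fst c"
    using W place_right_of[of R "(x, b)" _ "(M + 1, a2)"] x_le_fst_R by force
  show "(M + 1, a) \<notin> W"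
  proof
    assume "(M + 1, a) \<in> W"
    then have "(x, a - a2 + b) \<in> R" by (simp add: W mem_place)
    then show False using le_b a2(2) by force
  qed
qed

lemma glued_Mirror_Second:
  assumes "gluing P Q = Mirror_Second"
  shows "brick_equiv R W" "(M + 1, a) \<in> W" "\<forall>c\<in>W. M < fst c"
    "\<exists>r. a < r \<and> (M + 1, r) \<in> W \<and> is_down (M + 1, r) \<noteq> is_down (M, a)"
    "\<forall>r. (M + 1, r) \<in> W \<longrightarrow> is_down (M + 1, r) \<noteq> is_down (M, a)"
proof -
  define b2 where "b2 = Max (col R x - {b})"
  have not_Top: "gluing P Q \<noteq> Top" using assms by simp
  have "2 \<le> card (col R x)" using assms by (auto simp: gluing_def Let_def split: if_splits)
  then have "col R x - {b} \<noteq> {}" using card_mono[of "{b}" "col R x"] by auto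
  then have "b2 \<in> col R x - {b}" unfolding b2_def using finite_col_x by (intro Max_in) auto
  then have b2: "(x, b2) \<in> R" "b2 < b" using le_b by force+
  have parity: "is_down (x, b2) = is_down (M + 1, a)"
    using first_col_R_orientation[OF not_Top b2(1)] by (simp add: is_down_right)
  have W: "W = place R (x, b2) (M + 1, a)" using assms by (simp add: glued_def Let_def b2_def)
  have col_W: "is_down (M + 1, r) \<noteq> is_down (M, a)" if "(M + 1, r) \<in> W" for r
  proof -
    have "(x, r - a + b2) \<in> R" using that by (simp add: W mem_place)
    then have "is_down (x, r - a + b2) \<noteq> is_down (M, a)"
      by (rule first_col_R_orientation[OF not_Top])
    then show ?thesis using is_down_place[OF parity, of "(M + 1, r)"] by simp
  qed
  show "brick_equiv R W" using brick_equiv_place[OF parity] by (simp add: W)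
  show "(M + 1, a) \<in> W" using W b2(1) by (simp add: target_mem_place)
  show "\<forall>c\<in>W. M < fst c"
    using W place_right_of[of R "(x, b2)" _ "(M + 1, a)"] x_le_fst_R by force
  have "(M + 1, a + (b - b2)) \<in> W" using b_mem by (simp add: W mem_place)
  then show "\<exists>r. a < r \<and> (M + 1, r) \<in> W \<and> is_down (M + 1, r) \<noteq> is_down (M, a)"
    using b2(2) col_W by (intro exI[of _ "a + (b - b2)"]) simp
  show "\<forall>r. (M + 1, r) \<in> W \<longrightarrow> is_down (M + 1, r) \<noteq> is_down (M, a)" using col_W by blast
qed

lemma place_first_right:
  assumes "gluing P Q \<in> {Above, Moved, Below}" "c \<in> place R (x, b) d" "c \<noteq> d"
  shows "fst d < fst c"
proof -
  have "c - d + (x, b) \<in> R" "c - d + (x, b) \<noteq> (x, b)" using assms(2,3) by (auto simp: mem_place)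
  then have "x < fst (c - d + (x, b))" by (rule R_right_of_first[OF assms(1)])
  then show ?thesis by simp
qed

lemma glued_Above:
  assumes "gluing P Q = Above"
  shows "brick_equiv R W" "(M, a + 1) \<in> W" "\<forall>c\<in>W - {(M, a + 1)}. M < fst c"
    "(M + 1, a + 1) \<in> W" "\<not> is_down (M, a) \<Longrightarrow> (M + 1, a) \<in> W"
proof -
  have single: "gluing P Q \<in> {Above, Moved, Below}" using assms by simp
  have W: "W = place R (x, b) (M, a + 1)" using assms by (simp add: glued_def Let_def)
  have parity: "is_down (x, b) = is_down (M, a + 1)"
    using first_col_R_orientation[OF _ b_mem] assms by (simp add: is_down_up)
  show "brick_equiv R W" using brick_equiv_place[OF parity] by (simp add: W)
  show "(M, a + 1) \<in> W" using W b_mem by (simp add: target_mem_place)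
  show "\<forall>c\<in>W - {(M, a + 1)}. M < fst c" using place_first_right[OF single] W by force
  show "(M + 1, a + 1) \<in> W" using R_first_neighbour[OF single]
    by (simp add: W mem_place add.commute)
  show "(M + 1, a) \<in> W" if "\<not> is_down (M, a)"
  proof -
    have "(x + 1, b - 1) \<in> R" using assms that by (auto simp: gluing_def Let_def split: if_splits)
    then show ?thesis by (simp add: W mem_place add.commute)
  qed
qed

lemma glued_Moved:
  assumes "gluing P Q = Moved"
  shows "brick_equiv R (insert (M, a + 1) (W - {(M + 1, a)}))"
    "\<forall>c\<in>W. M < fst c" "(M + 1, a) \<in> W" "(M + 1, a + 1) \<in> W" "(M + 1, a + 2) \<in> W"
    "\<not> is_down (M, a)"
proof -
  let ?W0 = "place R (x, b) (M, a + 1)"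
  have single: "gluing P Q \<in> {Above, Moved, Below}" using assms by simp
  have W: "W = insert (M + 1, a) (?W0 - {(M, a + 1)})" using assms by (simp add: glued_def Let_def)
  have cases: "\<not> is_down (M, a)" "(x + 1, b - 1) \<notin> R" "(x + 1, b + 1) \<in> R"
    using assms by (auto simp: gluing_def Let_def split: if_splits)
  have parity: "is_down (x, b) = is_down (M, a + 1)"
    using first_col_R_orientation[OF _ b_mem] assms by (simp add: is_down_up)
  have "(M + 1, a) \<notin> ?W0" "(M, a + 1) \<in> ?W0"
    using cases(2) b_mem by (simp_all add: mem_place target_mem_place add.commute)
  then have W0: "insert (M, a + 1) (W - {(M + 1, a)}) = ?W0" by (auto simp: W)
  show "brick_equiv R (insert (M, a + 1) (W - {(M + 1, a)}))"
    using brick_equiv_place[OF parity] by (simp add: W0)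
  show "\<forall>c\<in>W. M < fst c" using place_first_right[OF single] W by force
  show "(M + 1, a) \<in> W" by (simp add: W)
  show "(M + 1, a + 1) \<in> W" using R_first_neighbour[OF single]
    by (simp add: W mem_place add.commute)
  show "(M + 1, a + 2) \<in> W" using cases(3) by (simp add: W mem_place add.commute)
  show "\<not> is_down (M, a)" by (fact cases(1))
qed

lemma glued_Moved_poly:
  assumes "gluing P Q = Moved"
  shows "brick_poly m W"
proof -
  let ?W0 = "place R (x, b) (M, a + 1)" and ?v = "(M, a + 1) - (x, b)"
  have single: "gluing P Q \<in> {Above, Moved, Below}" using assms by simp
  have W: "W = insert (M + 1, a) (?W0 - {(M, a + 1)})" using assms by (simp add: glued_def Let_def)
  have cases: "\<not> is_down (M, a)" "(x + 1, b - 1) \<notin> R"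
    using assms by (auto simp: gluing_def Let_def split: if_splits)
  have "is_down (x, b) = is_down (M, a + 1)"
    using first_col_R_orientation[OF _ b_mem] assms by (simp add: is_down_up)
  then have "even_vec ?v" by (simp only: even_vec_diff_iff)
  then have W0: "brick_poly m ?W0" using R_poly by (simp add: place_def)
  have in_W0: "(M, a + 1) \<in> ?W0" "(M + 1, a + 1) \<in> ?W0" "(M + 1, a) \<notin> ?W0"
    using b_mem R_first_neighbour[OF single] cases(2) by (simp_all add: mem_place add.commute)
  have leaf: "d = (M + 1, a + 1)" if "d \<in> ?W0" "brick_adj (M, a + 1) d" for d
  proof -
    have "brick_adj (?v + (x, b)) (?v + (d - ?v))" using that(2) by simp
    then have "brick_adj (x, b) (d - ?v)" using \<open>even_vec ?v\<close> by (simp only: brick_adj_add)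
    moreover have "d - ?v \<in> R" using that(1) by (simp add: place_def mem_shift)
    ultimately have "d - ?v = (x + 1, b)" by (rule R_first_leaf[OF single, rotated])
    then show ?thesis by (simp add: algebra_simps prod_eq_iff)
  qed
  have "connected_in brick_adj (?W0 - {(M, a + 1)})"
    using W0 in_W0(2) leaf
    by (intro connected_in_remove_leaf[OF symp_brick_adj]) (auto simp: brick_poly_def)
  moreover have "brick_adj (M + 1, a + 1) (M + 1, a)" using cases(1)
    by (simp add: brick_adj_def is_down_right)
  ultimately have "connected_in brick_adj ((?W0 - {(M, a + 1)}) \<union> {(M + 1, a)})"
    using in_W0(2) by (intro connected_in_Un[OF symp_brick_adj _ connected_in_singleton]) auto
  moreover have "card W = m"
    using W0 in_W0 m_ge_2 by (simp add: W brick_poly_def card_Diff_singleton)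
  ultimately show ?thesis using W0 by (simp add: W brick_poly_def)
qed

lemma glued_Below:
  assumes "gluing P Q = Below"
  shows "brick_equiv R W" "(M, a - 1) \<in> W" "\<forall>c\<in>W - {(M, a - 1)}. M < fst c"
    "(M + 1, a) \<notin> W" "\<not> is_down (M, a)"
proof -
  have single: "gluing P Q \<in> {Above, Moved, Below}" using assms by simp
  have W: "W = place R (x, b) (M, a - 1)" using assms by (simp add: glued_def Let_def)
  have cases: "\<not> is_down (M, a)" "(x + 1, b + 1) \<notin> R"
    using assms by (auto simp: gluing_def Let_def split: if_splits)
  have "is_down (M, a - 1 + 1) \<longleftrightarrow> \<not> is_down (M, a - 1)" by (rule is_down_up)
  then have parity: "is_down (x, b) = is_down (M, a - 1)"
    using first_col_R_orientation[OF _ b_mem] assms by simp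
  show "brick_equiv R W" using brick_equiv_place[OF parity] by (simp add: W)
  show "(M, a - 1) \<in> W" using W b_mem by (simp add: target_mem_place)
  show "\<forall>c\<in>W - {(M, a - 1)}. M < fst c" using place_first_right[OF single] W by force
  show "(M + 1, a) \<notin> W" using cases(2) by (simp add: W mem_place add.commute)
  show "\<not> is_down (M, a)" by (fact cases(1))
qed

lemma glued_right_of_M: "gluing P Q \<notin> {Above, Below} \<Longrightarrow> \<forall>c\<in>W. M < fst c"
  using glued_Top(3) glued_Lower(3) glued_Mirror_Lower(3) glued_Mirror_Second(3) glued_Moved(2)
  by (cases "gluing P Q") auto

lemma brick_poly_glued: "brick_poly m W"
proof (cases "gluing P Q")
  case Moved
  then show ?thesis by (rule glued_Moved_poly)
qed (use Q R_poly brick_poly_brick_equiv glued_Top(1) glued_Lower(1) glued_Mirror_Lower(1)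
       glued_Mirror_Second(1) glued_Above(1) glued_Below(1) in blast)+

lemma disjoint_if_right_of_M: "\<forall>c\<in>W. M < fst c \<Longrightarrow> P \<inter> W = {}"
  using fst_le_M by fastforce

lemma disjoint_if_stacked:
  assumes "col P M = {a}" "r \<noteq> a" "\<forall>c\<in>W - {(M, r)}. M < fst c"
  shows "P \<inter> W = {}"
proof -
  have "c \<notin> W" if "c \<in> P" for c
  proof
    assume "c \<in> W"
    then have "c = (M, r) \<or> M < fst c" using assms(3) by blast
    moreover have "(M, r) \<notin> P" using assms(1,2) by (metis mem_col singletonD)
    ultimately show False using that fst_le_M[OF that] by auto
  qed
  then show ?thesis by blast
qed

lemma glued_disjoint: "P \<inter> W = {}"
proof (cases "gluing P Q")
  case Above
  then show ?thesis using col_M_single glued_Above(3)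
    by (intro disjoint_if_stacked[of "a + 1"]) auto
next
  case Below
  then show ?thesis using col_M_single glued_Below(3)
    by (intro disjoint_if_stacked[of "a - 1"]) auto
qed (use disjoint_if_right_of_M glued_right_of_M in auto)+

lemma glued_touches: "\<exists>p\<in>P. \<exists>w\<in>W. brick_adj p w"
proof -
  have right: "brick_adj (k, r) (k + 1, r)" for k r by (simp add: brick_adj_def)
  show ?thesis
  proof (cases "gluing P Q")
    case Lower
    then show ?thesis using glued_Lower(2) right by blast
  next
    case Mirror_Lower
    then show ?thesis using glued_Mirror_Lower(2) right by blast
  next
    case Above
    have "brick_adj (M, a) (M, a + 1)" if "is_down (M, a)" using that by (simp add: brick_adj_def)
    then show ?thesis using glued_Above(2,5)[OF Above] top_mem right by blast
  next
    case Below
    have "brick_adj (M, a) (M, a - 1)"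
      using glued_Below(5)[OF Below] is_down_up[of M "a - 1"] by (simp add: brick_adj_def)
    then show ?thesis using glued_Below(2)[OF Below] top_mem by blast
  qed (use top_mem right glued_Top(2) glued_Mirror_Second(2) glued_Moved(3) in blast)+
qed

lemma brick_poly_composite: "brick_poly (l + m) (P \<union> W)"
proof -
  obtain p w where "p \<in> P" "w \<in> W" "brick_adj p w" using glued_touches by blast
  then have "connected_in brick_adj (P \<union> W)"
    using P brick_poly_glued
    by (intro connected_in_Un[OF symp_brick_adj]) (auto simp: brick_poly_def)
  moreover have "card (P \<union> W) = l + m"
    using P brick_poly_glued glued_disjoint by (simp add: brick_poly_def card_Un_disjoint)
  ultimately show ?thesis using P brick_poly_glued by (simp add: brick_poly_def)
qed

lemma decode_composite: "decode l (P \<union> W) = P"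
proof -
  have fin: "finite P" "card P = l" "finite W" using P brick_poly_glued
    by (auto simp: brick_poly_def)
  show ?thesis
  proof (cases "gluing P Q")
    case Above
    have "split_cell (P \<union> W) M a = (M, a)" using glued_Above(4)[OF Above]
      by (simp add: split_cell_def)
    then show ?thesis
      using Above col_M_single glued_Above(2,3)[OF Above] l_pos fin
      by (intro decode_Un_stacked[of P l W a "a + 1"]) simp_all
  next
    case Below
    have "(M + 1, a) \<notin> P" using fst_le_M by fastforce
    then have "split_cell (P \<union> W) M (a - 1) = (M, a)"
      using glued_Below(4,5)[OF Below] is_down_up[of M "a - 1"] by (simp add: split_cell_def)
    then show ?thesis
      using Below col_M_single glued_Below(2,3)[OF Below] l_pos fin
      by (intro decode_Un_stacked[of P l W a "a - 1"]) simp_all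
  qed (use decode_Un_right[OF fin(1,2) l_pos fin(3)] glued_right_of_M in auto)+
qed

lemma gluing_unlike_rows: "gluing P Q \<noteq> Top \<Longrightarrow> unlike_rows P \<noteq> {} \<longleftrightarrow> gluing P Q = Lower"
  by (auto simp: gluing_def Let_def split: if_splits)

lemma gluing_card_col_M:
  "gluing P Q \<notin> {Top, Lower} \<Longrightarrow> 2 \<le> card (col P M) \<longleftrightarrow> gluing P Q = Mirror_Lower"
  by (auto simp: gluing_def Let_def split: if_splits)

lemma top_pattern_glued:
  assumes "gluing P Q \<notin> {Above, Below}"
  shows "top_pattern P W \<longleftrightarrow> gluing P Q = Top"
proof (cases "gluing P Q")
  case Top
  then show ?thesis using glued_Top(2,4)[OF Top] by (simp add: top_pattern_def Let_def)
next
  case Lower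
  have "(M + 1, a) \<notin> W" using glued_Lower(4)[OF Lower] is_down_right[of M a] by auto
  then show ?thesis using Lower by (simp add: top_pattern_def Let_def)
next
  case Mirror_Lower
  then show ?thesis using glued_Mirror_Lower(4)[OF Mirror_Lower] by (simp add: top_pattern_def Let_def)
next
  case Mirror_Second
  then show ?thesis using glued_Mirror_Second(4)[OF Mirror_Second] by (auto simp: top_pattern_def Let_def)
next
  case Moved
  have "is_down (M + 1, a + 2) \<noteq> is_down (M, a)" unfolding is_down_def fst_conv snd_conv by presburger
  then have "\<exists>r. a < r \<and> (M + 1, r) \<in> W \<and> is_down (M + 1, r) \<noteq> is_down (M, a)"
    using glued_Moved(5)[OF Moved] by (intro exI[of _ "a + 2"]) simp
  then show ?thesis using Moved by (auto simp: top_pattern_def Let_def)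
qed (use assms in simp_all)

lemma unlike_pattern_glued:
  assumes "gluing P Q \<in> {Mirror_Second, Moved}"
  shows "unlike_pattern P W \<longleftrightarrow> gluing P Q = Mirror_Second"
proof -
  have "is_down (M + 1, a + 1) = is_down (M, a)" unfolding is_down_def fst_conv snd_conv by presburger
  then show ?thesis
    using assms glued_Mirror_Second(5) glued_Moved(4) by (auto simp: unlike_pattern_def Let_def)
qed

lemma gluing_of_glued_Above:
  assumes "gluing P Q = Above"
  shows "gluing_of P W = Above"
proof -
  have "\<exists>c\<in>W. fst c \<le> M" using glued_Above(2)[OF assms] by (intro bexI[of _ "(M, a + 1)"]) simp_all
  then show ?thesis using glued_Above(2)[OF assms] by (simp add: gluing_of_stacked)
qed

lemma gluing_of_glued_Below:
  assumes "gluing P Q = Below"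
  shows "gluing_of P W = Below"
proof -
  have "(M, a + 1) \<notin> W"
  proof
    assume "(M, a + 1) \<in> W"
    then have "(M, a + 1) \<in> W - {(M, a - 1)}" by simp
    then have "M < fst (M, a + 1)" using glued_Below(3)[OF assms] by blast
    then show False by simp
  qed
  moreover have "\<exists>c\<in>W. fst c \<le> M"
    using glued_Below(2)[OF assms] by (intro bexI[of _ "(M, a - 1)"]) simp_all
  ultimately show ?thesis by (simp add: gluing_of_stacked)
qed

lemma gluing_of_glued: "gluing_of P W = gluing P Q"
proof (cases "gluing P Q \<in> {Above, Below}")
  case False
  then have "gluing_of P W =
    (if top_pattern P W then Top
     else if unlike_rows P \<noteq> {} then Lower
     else if 2 \<le> card (col P M) then Mirror_Lower
     else if unlike_pattern P W then Mirror_Second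
     else Moved)"
    by (intro gluing_of_right_of glued_right_of_M)
  also have "\<dots> = gluing P Q"
    using False gluing_unlike_rows gluing_card_col_M top_pattern_glued unlike_pattern_glued
    by (cases "gluing P Q") simp_all
  finally show ?thesis .
qed (auto simp: gluing_of_glued_Above gluing_of_glued_Below)

lemma unglue_glued: "brick_equiv Q (unglue P W)"
proof (cases "gluing P Q")
  case Top
  then show ?thesis using glued_Top(1) gluing_of_glued by (simp add: unglue_def)
next
  case Lower
  then show ?thesis using glued_Lower(1) gluing_of_glued by (simp add: unglue_def)
next
  case Moved
  then show ?thesis using brick_equiv_mirror_image[OF glued_Moved(1)[OF Moved]] gluing_of_glued
    by (simp add: unglue_def)
qed (use gluing_of_glued brick_equiv_mirror_image glued_Mirror_Lower(1) glued_Mirror_Second(1)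
       glued_Above(1) glued_Below(1) in \<open>simp add: unglue_def\<close>)+

end

section \<open>Supermultiplicativity\<close>

lemma composite_first_factor:
  assumes "glue_pair P Q l m" "glue_pair P' Q' l m" "even_vec v"
    and "shift v (P \<union> glued P Q) = P' \<union> glued P' Q'"
  shows "shift v P = P'"
proof -
  interpret A: glue_pair P Q l m by fact
  interpret B: glue_pair P' Q' l m by fact
  have "finite (P \<union> glued P Q)" "P \<union> glued P Q \<noteq> {}" "l \<le> card (P \<union> glued P Q)"
    using A.brick_poly_composite A.P_nonempty by (auto simp: brick_poly_def)
  then have "decode l (shift v (P \<union> glued P Q)) = shift v P"
    using decode_shift[OF _ _ _ assms(3)] A.decode_composite by metis
  then show ?thesis using assms(4) B.decode_composite by simp
qed

lemma composite_equiv_first_factor: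
  assumes "glue_pair P Q l m" "glue_pair P' Q' l m"
    and "brick_equiv (P \<union> glued P Q) (P' \<union> glued P' Q')"
  shows "brick_equiv P P'"
  using assms composite_first_factor brick_equiv_def by metis

lemma composite_equiv_second_factor:
  assumes "glue_pair P Q l m" "glue_pair P Q' l m"
    and "brick_equiv (P \<union> glued P Q) (P \<union> glued P Q')"
  shows "brick_equiv Q Q'"
proof -
  interpret A: glue_pair P Q l m by fact
  interpret B: glue_pair P Q' l m by fact
  obtain v where v: "even_vec v" "shift v (P \<union> glued P Q) = P \<union> glued P Q'"
    using assms(3) by (auto simp: brick_equiv_def)
  then have "shift v P = P" using composite_first_factor assms(1,2) by blast
  then have "v = 0" using shift_fixed A.finite_P A.P_nonempty by blast
  then have "P \<union> glued P Q = P \<union> glued P Q'" using v(2) by simp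
  then have "glued P Q = glued P Q'" using A.glued_disjoint B.glued_disjoint by blast
  then show ?thesis
    using A.unglue_glued B.unglue_glued brick_equiv_sym brick_equiv_trans by metis
qed

lemma brick_class_representative:
  assumes "K \<in> brick_classes n"
  shows "brick_poly n (SOME S. S \<in> K)" "K = brick_class n (SOME S. S \<in> K)"
proof -
  obtain S where S: "K = brick_class n S" "brick_poly n S" using assms
    by (auto simp: brick_classes_def)
  then have "(SOME S. S \<in> K) \<in> K" using brick_class_self by (metis someI)
  then show "brick_poly n (SOME S. S \<in> K)" "K = brick_class n (SOME S. S \<in> K)"
    using S brick_class_eq by (auto simp: brick_class_def)
qed

lemma card_brick_classes_add:
  assumes l: "1 \<le> l" and m: "2 \<le> m"
  shows "card (brick_classes l) * card (brick_classes m) \<le> card (brick_classes (l + m))"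
proof -
  define rep :: "brick set set \<Rightarrow> brick set" where "rep K = (SOME S. S \<in> K)" for K
  define F where "F = (\<lambda>(K1, K2). brick_class (l + m) (rep K1 \<union> glued (rep K1) (rep K2)))"
  note rep = brick_class_representative[folded rep_def]
  have pair: "glue_pair (rep K1) (rep K2) l m"
    if "K1 \<in> brick_classes l" "K2 \<in> brick_classes m" for K1 K2
    using rep(1)[OF that(1)] rep(1)[OF that(2)] l m by unfold_locales
  have "F ` (brick_classes l \<times> brick_classes m) \<subseteq> brick_classes (l + m)"
    using glue_pair.brick_poly_composite[OF pair] by (auto simp: F_def brick_classes_def)
  moreover have "inj_on F (brick_classes l \<times> brick_classes m)"
  proof (rule inj_onI, clarify)
    fix K1 K2 K1' K2'
    assume K: "K1 \<in> brick_classes l" "K2 \<in> brick_classes m"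
      "K1' \<in> brick_classes l" "K2' \<in> brick_classes m"
      and "F (K1, K2) = F (K1', K2')"
    then have equiv:
      "brick_equiv (rep K1 \<union> glued (rep K1) (rep K2)) (rep K1' \<union> glued (rep K1') (rep K2'))"
      using glue_pair.brick_poly_composite[OF pair[OF K(3,4)]]
      by (intro brick_equiv_if_class_eq[where n = "l + m"]) (simp_all add: F_def)
    then have "K1 = K1'"
      using composite_equiv_first_factor pair K rep(2) brick_class_eq by metis
    moreover have "brick_equiv (rep K2) (rep K2')"
      using composite_equiv_second_factor pair K equiv \<open>K1 = K1'\<close> by metis
    then have "K2 = K2'" using rep(2) K brick_class_eq by metis
    ultimately show "K1 = K1' \<and> K2 = K2'" by simp
  qed
  ultimately have "card (brick_classes l \<times> brick_classes m) \<le> card (brick_classes (l + m))"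
    using card_inj_on_le finite_brick_classes by blast
  then show ?thesis by (simp add: card_cartesian_product)
qed

theorem theorem4:
  fixes l m :: nat
  assumes "l \<ge> 1" and "m \<ge> 1" and "\<not> (l = 1 \<and> m = 1)"
  shows "T (l + m) \<ge> T l * T m"
proof (cases "m \<ge> 2")
  case True
  then show ?thesis
    using card_brick_classes_add[OF assms(1) True] by (simp add: T_eq_card_brick_classes)
next
  case False
  then have "m = 1" "2 \<le> l" using assms by auto
  then show ?thesis
    using card_brick_classes_add[of m l]
    by (simp add: T_eq_card_brick_classes add.commute mult.commute)
qed

end
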